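(* Let $F:[-1,1]^n\to[-\alpha,\alpha]$ be a multilinear polynomial, with $\alpha>0$, and let $0<\eta\le\frac{1}{\alpha n}$. Let $(x_t)$ be the projected gradient descent sequence $x_{t+1}=\Pi_{[-1,1]^n}(x_t-\eta\nabla F(x_t))$ with $x_0\in[-1,1]^n$. Then for every $t$, $$F(x_{t+1})-F(x_t)\le-\frac{\eta}{2}\|G(x_t)\|_2^2.$$
   Context: $\Pi_{[-1,1]^n}(y)=\arg\min_{x\in[-1,1]^n}\tfrac12\|x-y\|_2^2$ is the Euclidean projection onto the cube. The projected gradient mapping is $G(x)=\frac1\eta\big(x-\Pi_{[-1,1]^n}(x-\eta\nabla F(x))\big)$, so that $x_{t+1}=x_t-\eta G(x_t)$. *)

theory Defs
  imports "HOL-Analysis.Analysis"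
begin

text \<open>The cube [-1,1]^n, with n = CARD('n).\<close>
definition cube :: "(real^'n) set" where
  "cube = {x. \<forall>i. -1 \<le> x $ i \<and> x $ i \<le> 1}"

definition proj_cube :: "real^'n \<Rightarrow> real^'n" where
  "proj_cube y = closest_point cube y"

definition multilinear :: "(real^'n \<Rightarrow> real) \<Rightarrow> bool" where
  "multilinear F \<longleftrightarrow> (\<exists>c :: 'n set \<Rightarrow> real. \<forall>x. F x = (\<Sum>S\<in>UNIV. c S * (\<Prod>i\<in>S. x $ i)))"

definition grad_map :: "real \<Rightarrow> (real^'n \<Rightarrow> real^'n) \<Rightarrow> real^'n \<Rightarrow> real^'n" where
  "grad_map \<eta> gF x = (1 / \<eta>) *\<^sub>R (x - proj_cube (x - \<eta> *\<^sub>R gF x))"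

end

theory Submission
  imports Defs
begin

text \<open>
  A multilinear F is affine in every coordinate, so its k-th partial derivative is the
  half-difference of F between x_k = 1 and x_k = -1. Moving another coordinate j of the base
  point by d changes this half-difference by d times a mixed second difference of F, which is
  at most alpha on the cube. Hence every partial derivative is alpha-Lipschitz for the l1
  distance, and by Cauchy-Schwarz the gradient satisfies
  (grad F u - grad F v) . (u - v) <= alpha n |u - v|^2 on the cube. Integrating along segments
  gives the descent lemma with L = alpha n, and the variational inequality of the projection
  turns it into the sufficient-decrease estimate of projected gradient descent for eta <= 1/L.
\<close>

lemma has_real_derivative_along_line:
  fixes F :: "'a::real_inner \<Rightarrow> real"
  assumes "(F has_derivative (\<lambda>h. g \<bullet> h)) (at (x + s *\<^sub>R d))"
  shows "((\<lambda>t. F (x + t *\<^sub>R d)) has_real_derivative (g \<bullet> d)) (at s)"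
proof -
  have line: "((\<lambda>t::real. x + t *\<^sub>R d) has_derivative (\<lambda>t. t *\<^sub>R d)) (at s)"
    by (auto intro!: derivative_eq_intros)
  have "((F \<circ> (\<lambda>t. x + t *\<^sub>R d)) has_derivative (\<lambda>t. g \<bullet> (t *\<^sub>R d))) (at s)"
    using diff_chain_at[OF line assms] by (simp add: o_def)
  moreover have "(\<lambda>t. g \<bullet> (t *\<^sub>R d)) = (*) (g \<bullet> d)"
    by (auto simp: mult.commute)
  ultimately show ?thesis
    by (simp add: has_field_derivative_def o_def)
qed

lemma descent_lemma:
  fixes F :: "'a::real_inner \<Rightarrow> real"
  assumes der: "\<And>y. y \<in> S \<Longrightarrow> (F has_derivative (\<lambda>h. gF y \<bullet> h)) (at y)"
    and smooth: "\<And>u v. u \<in> S \<Longrightarrow> v \<in> S \<Longrightarrow> (gF u - gF v) \<bullet> (u - v) \<le> L * (norm (u - v))\<^sup>2"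
    and "convex S" and x: "x \<in> S" and y: "y \<in> S"
  shows "F y - F x - gF x \<bullet> (y - x) \<le> L / 2 * (norm (y - x))\<^sup>2"
proof -
  define d where "d = y - x"
  define h where "h s = F (x + s *\<^sub>R d) - s * (gF x \<bullet> d) - L / 2 * s\<^sup>2 * (norm d)\<^sup>2" for s
  have "h 1 \<le> h 0"
  proof (rule DERIV_nonpos_imp_nonincreasing[OF zero_le_one])
    fix s :: real
    assume s: "0 \<le> s" "s \<le> 1"
    define z where "z = x + s *\<^sub>R d"
    have z: "z \<in> S"
      using convexD[OF \<open>convex S\<close> x y, of "1 - s" s] s by (simp add: z_def d_def algebra_simps)
    have "s * ((gF z - gF x) \<bullet> d) \<le> s * (L * s * (norm d)\<^sup>2)"
      using smooth[OF z x] by (simp add: z_def power2_eq_square algebra_simps)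
    then have "(gF z - gF x) \<bullet> d \<le> L * s * (norm d)\<^sup>2"
      using s by (cases "s = 0") (auto simp: z_def mult_le_cancel_left)
    then have "gF z \<bullet> d - gF x \<bullet> d - L * s * (norm d)\<^sup>2 \<le> 0"
      by (simp add: inner_diff_left)
    moreover have "(h has_real_derivative gF z \<bullet> d - gF x \<bullet> d - L * s * (norm d)\<^sup>2) (at s)"
      unfolding h_def z_def
      by (rule derivative_eq_intros has_real_derivative_along_line der refl z[unfolded z_def] | simp)+
    ultimately show "\<exists>y. (h has_real_derivative y) (at s) \<and> y \<le> 0"
      by blast
  qed
  then show ?thesis
    by (simp add: h_def d_def)
qed

lemma projected_gradient_step_decrease:
  fixes F :: "'a::euclidean_space \<Rightarrow> real"
  assumes "closed S" "convex S" "x \<in> S" "0 < \<eta>" "\<eta> * L \<le> 1"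
    and descent: "F y - F x - g \<bullet> (y - x) \<le> L / 2 * (norm (y - x))\<^sup>2"
    and y: "y = closest_point S (x - \<eta> *\<^sub>R g)"
  shows "F y - F x \<le> - (\<eta> / 2) * (norm ((1 / \<eta>) *\<^sub>R (x - y)))\<^sup>2"
proof -
  define N where "N = (norm (y - x))\<^sup>2"
  have "(x - \<eta> *\<^sub>R g - y) \<bullet> (x - y) \<le> 0"
    unfolding y by (rule closest_point_dot[OF assms(2,1,3)])
  then have "\<eta> * (g \<bullet> (y - x)) \<le> - N"
    by (simp add: N_def power2_norm_eq_inner algebra_simps inner_diff_left inner_diff_right)
  then have "g \<bullet> (y - x) \<le> - N / \<eta>"
    using \<open>0 < \<eta>\<close> by (simp add: field_simps)
  moreover have "L / 2 * N \<le> N / (2 * \<eta>)"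
    using mult_right_mono[OF \<open>\<eta> * L \<le> 1\<close>, of N] \<open>0 < \<eta>\<close> by (simp add: N_def field_simps)
  ultimately have "F y - F x \<le> - N / (2 * \<eta>)"
    using descent by (simp add: N_def)
  also have "\<dots> = - (\<eta> / 2) * (N / \<eta>\<^sup>2)"
    using \<open>0 < \<eta>\<close> by (simp add: field_simps power2_eq_square)
  also have "N / \<eta>\<^sup>2 = (norm ((1 / \<eta>) *\<^sub>R (x - y)))\<^sup>2"
    using \<open>0 < \<eta>\<close> by (simp add: N_def norm_minus_commute power_divide)
  finally show ?thesis .
qed

definition upd_coord :: "real^'n \<Rightarrow> 'n \<Rightarrow> real \<Rightarrow> real^'n" where
  "upd_coord z k t = (\<chi> i. if i = k then t else z $ i)"

lemma upd_coord_nth [simp]: "upd_coord z k t $ i = (if i = k then t else z $ i)"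
  by (simp add: upd_coord_def)

lemma upd_coord_upd_coord_same [simp]: "upd_coord (upd_coord z k s) k t = upd_coord z k t"
  by (simp add: vec_eq_iff)

lemma upd_coord_commute: "j \<noteq> k \<Longrightarrow> upd_coord (upd_coord z k s) j t = upd_coord (upd_coord z j t) k s"
  by (simp add: vec_eq_iff)

lemma upd_coord_nth_self [simp]: "upd_coord z k (z $ k) = z"
  by (simp add: vec_eq_iff)

lemma upd_coord_in_cube: "z \<in> cube \<Longrightarrow> \<bar>t\<bar> \<le> 1 \<Longrightarrow> upd_coord z k t \<in> cube"
  by (auto simp: cube_def)

lemma cube_eq_cbox: "cube = cbox (-1) (1::real^'n)"
  by (auto simp: cube_def mem_box_cart)

lemma abs_nth_le_1_if_in_cube: "z \<in> cube \<Longrightarrow> \<bar>z $ i\<bar> \<le> 1"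
  by (simp add: cube_def abs_le_iff)

lemma closed_cube: "closed cube" and convex_cube: "convex cube"
  by (simp_all add: cube_eq_cbox closed_cbox)

lemma proj_cube_in_cube:
  fixes y :: "real^'n"
  shows "proj_cube y \<in> cube"
proof -
  have "(0 :: real^'n) \<in> cube"
    by (simp add: cube_def)
  then show ?thesis
    unfolding proj_cube_def by (intro closest_point_in_set closed_cube) blast
qed

definition coord_slope :: "(real^'n \<Rightarrow> real) \<Rightarrow> real^'n \<Rightarrow> 'n \<Rightarrow> real" where
  "coord_slope F z k = (F (upd_coord z k 1) - F (upd_coord z k (-1))) / 2"

lemma coord_slope_upd_coord_same [simp]: "coord_slope F (upd_coord z k t) k = coord_slope F z k"
  by (simp add: coord_slope_def)

lemma multilinear_affine_in_coord:
  assumes "multilinear F"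
  obtains a b where "\<And>t. F (upd_coord z k t) = a + t * b"
proof -
  obtain c where F: "\<And>x. F x = (\<Sum>S\<in>UNIV. c S * (\<Prod>i\<in>S. x $ i))"
    using assms unfolding multilinear_def by blast
  have monomial: "c S * (\<Prod>i\<in>S. upd_coord z k t $ i)
      = (if k \<in> S then 0 else c S * (\<Prod>i\<in>S. z $ i))
        + t * (if k \<in> S then c S * (\<Prod>i\<in>S - {k}. z $ i) else 0)" for S t
  proof (cases "k \<in> S")
    case True
    then have "(\<Prod>i\<in>S. upd_coord z k t $ i) = t * (\<Prod>i\<in>S - {k}. upd_coord z k t $ i)"
      by (simp add: prod.remove)
    also have "(\<Prod>i\<in>S - {k}. upd_coord z k t $ i) = (\<Prod>i\<in>S - {k}. z $ i)"
      by (rule prod.cong) auto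
    finally show ?thesis
      using True by simp
  qed (auto intro: prod.cong)
  show thesis
    by (rule that[of "\<Sum>S\<in>UNIV. if k \<in> S then 0 else c S * (\<Prod>i\<in>S. z $ i)"
          "\<Sum>S\<in>UNIV. if k \<in> S then c S * (\<Prod>i\<in>S - {k}. z $ i) else 0"])
      (simp only: F monomial sum.distrib sum_distrib_left)
qed

lemma multilinear_upd_coord_diff:
  assumes "multilinear F"
  shows "F (upd_coord z k t) - F (upd_coord z k t') = (t - t') * coord_slope F z k"
proof -
  obtain a b where "\<And>t. F (upd_coord z k t) = a + t * b"
    using multilinear_affine_in_coord[OF assms, where z = z and k = k] by metis
  then show ?thesis
    by (simp add: coord_slope_def algebra_simps)
qed

lemma abs_coord_slope_le:
  assumes bound: "\<And>y. y \<in> cube \<Longrightarrow> \<bar>F y\<bar> \<le> \<alpha>" and "z \<in> cube"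
  shows "\<bar>coord_slope F z k\<bar> \<le> \<alpha>"
proof -
  have "\<bar>F (upd_coord z k 1)\<bar> \<le> \<alpha>" "\<bar>F (upd_coord z k (-1))\<bar> \<le> \<alpha>"
    using bound upd_coord_in_cube[OF \<open>z \<in> cube\<close>] by auto
  then show ?thesis
    by (simp add: coord_slope_def abs_le_iff)
qed

lemma coord_slope_upd_coord_diff:
  assumes ml: "multilinear F" and bound: "\<And>y. y \<in> cube \<Longrightarrow> \<bar>F y\<bar> \<le> \<alpha>"
    and z: "z \<in> cube"
  shows "\<bar>coord_slope F (upd_coord z j t) k - coord_slope F (upd_coord z j t') k\<bar> \<le> \<alpha> * \<bar>t - t'\<bar>"
proof (cases "j = k")
  case True
  have "0 \<le> \<alpha>"
    using bound[OF z] by simp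
  with True show ?thesis
    by simp
next
  case False
  have "coord_slope F (upd_coord z j t) k - coord_slope F (upd_coord z j t') k
      = ((F (upd_coord (upd_coord z k 1) j t) - F (upd_coord (upd_coord z k 1) j t'))
        - (F (upd_coord (upd_coord z k (-1)) j t) - F (upd_coord (upd_coord z k (-1)) j t'))) / 2"
    by (simp add: coord_slope_def upd_coord_commute[OF False] diff_divide_distrib)
  also have "\<dots> = (t - t') * (coord_slope F (upd_coord z k 1) j - coord_slope F (upd_coord z k (-1)) j) / 2"
    by (simp only: multilinear_upd_coord_diff[OF ml] right_diff_distrib)
  finally have diff: "\<bar>coord_slope F (upd_coord z j t) k - coord_slope F (upd_coord z j t') k\<bar>
      = \<bar>t - t'\<bar> * \<bar>coord_slope F (upd_coord z k 1) j - coord_slope F (upd_coord z k (-1)) j\<bar> / 2"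
    by (simp only: abs_mult abs_divide abs_numeral)
  have "\<bar>coord_slope F (upd_coord z k 1) j\<bar> \<le> \<alpha>" "\<bar>coord_slope F (upd_coord z k (-1)) j\<bar> \<le> \<alpha>"
    using abs_coord_slope_le[OF bound upd_coord_in_cube[OF z]] by simp_all
  then have "\<bar>coord_slope F (upd_coord z k 1) j - coord_slope F (upd_coord z k (-1)) j\<bar> \<le> 2 * \<alpha>"
    by linarith
  then have "\<bar>t - t'\<bar> * \<bar>coord_slope F (upd_coord z k 1) j - coord_slope F (upd_coord z k (-1)) j\<bar>
      \<le> \<bar>t - t'\<bar> * (2 * \<alpha>)"
    by (rule mult_left_mono) simp
  then show ?thesis
    unfolding diff by (simp add: algebra_simps)
qed

lemma coord_slope_lipschitz:
  assumes ml: "multilinear F" and bound: "\<And>y. y \<in> cube \<Longrightarrow> \<bar>F y\<bar> \<le> \<alpha>"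
    and "u \<in> cube" and v: "v \<in> cube"
  shows "\<bar>coord_slope F u k - coord_slope F v k\<bar> \<le> \<alpha> * (\<Sum>j\<in>UNIV. \<bar>u $ j - v $ j\<bar>)"
proof -
  have "\<bar>coord_slope F u k - coord_slope F v k\<bar> \<le> \<alpha> * (\<Sum>j\<in>A. \<bar>u $ j - v $ j\<bar>)"
    if "finite A" "u \<in> cube" "\<forall>j. j \<notin> A \<longrightarrow> u $ j = v $ j" for A u
    using that
  proof (induction A arbitrary: u rule: finite_induct)
    case empty
    then have "u = v"
      by (simp add: vec_eq_iff)
    then show ?case
      by simp
  next
    case (insert a A)
    define w where "w = upd_coord u a (v $ a)"
    have w: "w \<in> cube"
      unfolding w_def using insert.prems(1) v by (intro upd_coord_in_cube abs_nth_le_1_if_in_cube)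
    have "\<bar>coord_slope F w k - coord_slope F v k\<bar> \<le> \<alpha> * (\<Sum>j\<in>A. \<bar>w $ j - v $ j\<bar>)"
      using insert.IH[OF w] insert.prems(2) by (simp add: w_def)
    also have "(\<Sum>j\<in>A. \<bar>w $ j - v $ j\<bar>) = (\<Sum>j\<in>A. \<bar>u $ j - v $ j\<bar>)"
      using insert.hyps(2) by (intro sum.cong) (auto simp: w_def)
    finally have IH: "\<bar>coord_slope F w k - coord_slope F v k\<bar> \<le> \<alpha> * (\<Sum>j\<in>A. \<bar>u $ j - v $ j\<bar>)" .
    have "upd_coord w a (u $ a) = u" "upd_coord w a (v $ a) = w"
      by (auto simp: w_def vec_eq_iff)
    then have "\<bar>coord_slope F u k - coord_slope F w k\<bar> \<le> \<alpha> * \<bar>u $ a - v $ a\<bar>"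
      using coord_slope_upd_coord_diff[OF ml bound w, of a "u $ a" k "v $ a"] by simp
    with IH show ?case
      using insert.hyps by (simp add: distrib_left)
  qed
  from this[of UNIV u] show ?thesis
    using assms(3) by simp
qed

lemma gradient_eq_coord_slope:
  assumes ml: "multilinear F" and der: "(F has_derivative (\<lambda>h. g \<bullet> h)) (at z)"
  shows "g $ k = coord_slope F z k"
proof -
  have line: "(\<lambda>t. F (z + t *\<^sub>R axis k 1)) = (\<lambda>t. F z + t * coord_slope F z k)"
  proof
    fix t
    have "z + t *\<^sub>R axis k 1 = upd_coord z k (z $ k + t)"
      by (simp add: vec_eq_iff axis_def)
    then show "F (z + t *\<^sub>R axis k 1) = F z + t * coord_slope F z k"
      using multilinear_upd_coord_diff[OF ml, of z k "z $ k + t" "z $ k"] by simp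
  qed
  have "((\<lambda>t. F z + t * coord_slope F z k) has_real_derivative g $ k) (at 0)"
    unfolding line[symmetric] using has_real_derivative_along_line[of F g z 0 "axis k 1"] der
    by (simp add: inner_axis)
  moreover have "((\<lambda>t. F z + t * coord_slope F z k) has_real_derivative coord_slope F z k) (at 0)"
    by (auto intro!: derivative_eq_intros)
  ultimately show ?thesis
    by (rule DERIV_unique)
qed

lemma multilinear_gradient_inner_diff_le:
  fixes u v :: "real^'n"
  assumes ml: "multilinear F" and der: "\<And>y. (F has_derivative (\<lambda>h. gF y \<bullet> h)) (at y)"
    and bound: "\<And>y. y \<in> cube \<Longrightarrow> \<bar>F y\<bar> \<le> \<alpha>" and u: "u \<in> cube" and v: "v \<in> cube"
  shows "(gF u - gF v) \<bullet> (u - v) \<le> \<alpha> * real CARD('n) * (norm (u - v))\<^sup>2"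
proof -
  define l1 where "l1 = (\<Sum>j\<in>UNIV. \<bar>u $ j - v $ j\<bar>)"
  have "0 \<le> \<alpha>"
    using bound[OF u] by simp
  have "(gF u - gF v) \<bullet> (u - v) = (\<Sum>k\<in>UNIV. (coord_slope F u k - coord_slope F v k) * (u $ k - v $ k))"
    by (simp add: inner_vec_def gradient_eq_coord_slope[OF ml der])
  also have "\<dots> \<le> (\<Sum>k\<in>UNIV. \<alpha> * l1 * \<bar>u $ k - v $ k\<bar>)"
  proof (rule sum_mono)
    fix k
    have "(coord_slope F u k - coord_slope F v k) * (u $ k - v $ k)
        \<le> \<bar>coord_slope F u k - coord_slope F v k\<bar> * \<bar>u $ k - v $ k\<bar>"
      by (simp add: abs_mult[symmetric])
    also have "\<dots> \<le> \<alpha> * l1 * \<bar>u $ k - v $ k\<bar>"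
      unfolding l1_def by (rule mult_right_mono[OF coord_slope_lipschitz[OF ml bound u v] abs_ge_zero])
    finally show "(coord_slope F u k - coord_slope F v k) * (u $ k - v $ k) \<le> \<alpha> * l1 * \<bar>u $ k - v $ k\<bar>" .
  qed
  also have "\<dots> = \<alpha> * l1\<^sup>2"
    by (simp only: flip: sum_distrib_left) (simp add: l1_def power2_eq_square)
  also have "\<dots> \<le> \<alpha> * (real CARD('n) * (norm (u - v))\<^sup>2)"
  proof (rule mult_left_mono[OF _ \<open>0 \<le> \<alpha>\<close>])
    have "l1\<^sup>2 \<le> (\<Sum>j\<in>UNIV. \<bar>u $ j - v $ j\<bar>\<^sup>2) * real CARD('n)"
      unfolding l1_def using sum_squared_le_sum_of_squares[of "\<lambda>j. \<bar>u $ j - v $ j\<bar>" UNIV] by simp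
    also have "(\<Sum>j\<in>UNIV. \<bar>u $ j - v $ j\<bar>\<^sup>2) = (norm (u - v))\<^sup>2"
      by (simp add: norm_vec_def L2_set_def sum_nonneg)
    finally show "l1\<^sup>2 \<le> real CARD('n) * (norm (u - v))\<^sup>2"
      by (simp add: mult.commute)
  qed
  finally show ?thesis
    by (simp add: mult.assoc)
qed

theorem lemma9:
  fixes F :: "real^'n \<Rightarrow> real" and gF :: "real^'n \<Rightarrow> real^'n"
    and \<alpha> \<eta> :: real and x :: "nat \<Rightarrow> real^'n"
  assumes "multilinear F"
    and "\<And>y. (F has_derivative (\<lambda>h. gF y \<bullet> h)) (at y)"
    and "\<alpha> > 0"
    and "\<And>y. y \<in> cube \<Longrightarrow> \<bar>F y\<bar> \<le> \<alpha>"
    and "0 < \<eta>" and "\<eta> \<le> 1 / (\<alpha> * real CARD('n))"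
    and "x 0 \<in> cube"
    and "\<And>t. x (Suc t) = proj_cube (x t - \<eta> *\<^sub>R gF (x t))"
  shows "F (x (Suc t)) - F (x t) \<le> - (\<eta> / 2) * (norm (grad_map \<eta> gF (x t)))\<^sup>2"
proof -
  have step: "x (Suc s) = closest_point cube (x s - \<eta> *\<^sub>R gF (x s))" for s
    using assms(8) by (simp add: proj_cube_def)
  have iterate_in_cube: "x s \<in> cube" for s
    by (cases s) (simp_all add: assms(7,8) proj_cube_in_cube)
  have "(gF u - gF v) \<bullet> (u - v) \<le> \<alpha> * real CARD('n) * (norm (u - v))\<^sup>2"
    if "u \<in> cube" "v \<in> cube" for u v
    by (rule multilinear_gradient_inner_diff_le[OF assms(1,2,4) that])
  then have descent: "F (x (Suc t)) - F (x t) - gF (x t) \<bullet> (x (Suc t) - x t)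
      \<le> \<alpha> * real CARD('n) / 2 * (norm (x (Suc t) - x t))\<^sup>2"
    by (rule descent_lemma[OF assms(2) _ convex_cube iterate_in_cube iterate_in_cube])
  have "\<eta> * (\<alpha> * real CARD('n)) \<le> 1"
    using assms(3,5,6) by (simp add: field_simps)
  from projected_gradient_step_decrease[OF closed_cube convex_cube iterate_in_cube
      \<open>0 < \<eta>\<close> this descent step]
  show ?thesis
    by (simp add: grad_map_def assms(8))
qed

end
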